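(* Let $(\Omega,\mathcal F)$ be a measurable space with $\Sigma\neq\emptyset$, $\nu$ a finite measure, and $\mu$ a finite measure with $\mu\ll\nu$. Let $F_\mu(y)=\nu(\{\omega:\frac{d\mu}{d\nu}(\omega)\le y\})$ ($y\ge0$), $F_\mu^{-1}(\beta)=\inf\{z\ge0: F_\mu(z)>\beta\}$ ($\beta\ge0$), and $v_\mu(A)=\int_0^\infty\min(\nu(\Omega)-F_\mu(z),\nu(A))\,dz$. Then $$v_\mu(A)=\int_{\nu(A^c)}^{\nu(\Omega)}F_\mu^{-1}(\beta)\,d\beta,\qquad A\in\mathcal F.$$
   Context: $\Sigma$ denotes the set of all classes $\mathcal I\subset\mathcal F$ that are chains (totally ordered by inclusion), contain $\emptyset$ and $\Omega$, and generate $\mathcal F$ as a $\sigma$-algebra. $\frac{d\mu}{d\nu}$ is the non-negative Radon–Nikodym derivative. *)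

theory Defs
  imports "HOL-Probability.Probability"
begin

definition Sigma_chains :: "'a measure \<Rightarrow> 'a set set set" where
  "Sigma_chains M = {I. I \<subseteq> sets M \<and> (\<forall>A\<in>I. \<forall>B\<in>I. A \<subseteq> B \<or> B \<subseteq> A)
      \<and> {} \<in> I \<and> space M \<in> I \<and> sigma_sets (space M) I = sets M}"

text \<open>F_mu(y) = nu({omega : dmu/dnu(omega) <= y}); here M = nu, N = mu.\<close>
definition F_mu :: "'a measure \<Rightarrow> 'a measure \<Rightarrow> real \<Rightarrow> real" where
  "F_mu M N y = measure M {\<omega> \<in> space M. RN_deriv M N \<omega> \<le> ennreal y}"

definition F_mu_inv :: "'a measure \<Rightarrow> 'a measure \<Rightarrow> real \<Rightarrow> real" where
  "F_mu_inv M N \<beta> = Inf {z. z \<ge> 0 \<and> F_mu M N z > \<beta>}"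

definition v_mu :: "'a measure \<Rightarrow> 'a measure \<Rightarrow> 'a set \<Rightarrow> real" where
  "v_mu M N A = (LBINT z:{0..}. min (measure M (space M) - F_mu M N z) (measure M A))"

end

theory Submission
  imports Defs
begin

(* Both sides are the Lebesgue measure of the region
     S = {(z, \<beta>). 0 \<le> z, \<nu>(A^c) \<le> \<beta> < \<nu>(\<Omega>), F(z) \<le> \<beta>},
   computed by Tonelli in the two orders. The z-section of S is an interval of length
   min (\<nu>(\<Omega>) - F(z)) \<nu>(A); the \<beta>-section is the sublevel set {z \<ge> 0. F(z) \<le> \<beta>}, an
   interval from 0 to F^-1(\<beta>) because F is monotone. This needs F(z) > \<beta> for some z,
   which holds since F(z) tends to \<nu>(\<Omega>) by continuity of \<nu> from below together with
   d\<mu>/d\<nu> < \<infinity> \<nu>-almost everywhere. *)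

lemma set_integral_eq_set_nn_integral:
  fixes f :: "'a \<Rightarrow> real"
  assumes "f \<in> borel_measurable M" and "A \<in> sets M" and "AE x\<in>A in M. 0 \<le> f x"
  shows "(LINT x:A|M. f x) = enn2real (\<integral>\<^sup>+x\<in>A. ennreal (f x) \<partial>M)"
proof -
  have "(LINT x:A|M. f x) = enn2real (\<integral>\<^sup>+x. ennreal (indicator A x * f x) \<partial>M)"
    unfolding set_lebesgue_integral_def using assms
    by (subst integral_eq_nn_integral) (auto simp: indicator_def)
  also have "(\<integral>\<^sup>+x. ennreal (indicator A x * f x) \<partial>M) = (\<integral>\<^sup>+x\<in>A. ennreal (f x) \<partial>M)"
    by (intro nn_integral_cong) (simp add: indicator_def)
  finally show ?thesis .
qed

(* Beyond the range of F the defining set is empty and the value is the junk Inf {};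
   hence the hypothesis \<exists>z\<ge>0. \<beta> < F z in the lemmas below. *)
definition generalized_inverse :: "(real \<Rightarrow> real) \<Rightarrow> real \<Rightarrow> real" where
  "generalized_inverse F \<beta> = Inf {z. 0 \<le> z \<and> \<beta> < F z}"

lemma generalized_inverse_nonneg:
  assumes "\<exists>z\<ge>0. \<beta> < F z"
  shows "0 \<le> generalized_inverse F \<beta>"
  using assms unfolding generalized_inverse_def by (auto intro: cInf_greatest)

lemma generalized_inverse_mono:
  assumes "\<beta> \<le> \<beta>'" and "\<exists>z\<ge>0. \<beta>' < F z"
  shows "generalized_inverse F \<beta> \<le> generalized_inverse F \<beta>'"
  unfolding generalized_inverse_def
  using assms by (intro cInf_superset_mono) (auto intro: bdd_belowI[of _ 0])

lemma borel_measurable_generalized_inverse: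
  fixes F :: "real \<Rightarrow> real"
  assumes "\<And>z. F z \<le> m" and "\<And>\<beta>. \<beta> < m \<Longrightarrow> \<exists>z\<ge>0. \<beta> < F z"
  shows "generalized_inverse F \<in> borel_measurable borel"
proof (rule borel_measurable_piecewise_mono[of "{{..<m}, {m..}}"])
  fix c assume "c \<in> {{..<m}, {m..}}"
  moreover have "mono_on {..<m} (generalized_inverse F)"
    using assms(2) by (auto intro!: mono_onI generalized_inverse_mono)
  moreover have "generalized_inverse F \<beta> = Inf {}" if "m \<le> \<beta>" for \<beta>
  proof -
    have "{z. 0 \<le> z \<and> \<beta> < F z} = {}"
      using assms(1)[THEN order_trans] that by (auto simp: not_less)
    then show ?thesis unfolding generalized_inverse_def by (rule arg_cong)
  qed
  then have "mono_on {m..} (generalized_inverse F)"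
    by (auto intro!: mono_onI)
  ultimately show "mono_on c (generalized_inverse F)" by auto
qed auto

lemma emeasure_sublevel_eq_generalized_inverse:
  fixes F :: "real \<Rightarrow> real"
  assumes "mono F" and "\<exists>z\<ge>0. \<beta> < F z"
  shows "emeasure lborel {z. 0 \<le> z \<and> F z \<le> \<beta>} = ennreal (generalized_inverse F \<beta>)"
proof -
  let ?L = "{z. 0 \<le> z \<and> F z \<le> \<beta>}" and ?U = "{z. 0 \<le> z \<and> \<beta> < F z}"
  let ?q = "generalized_inverse F \<beta>"
  have [measurable]: "F \<in> borel_measurable borel"
    using borel_measurable_mono[OF assms(1)] .
  have q_lower: "?q \<le> z" if "z \<in> ?U" for z
    unfolding generalized_inverse_def using that by (rule cInf_lower) (auto intro: bdd_belowI[of _ 0])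
  have "F z \<le> \<beta>" if "0 \<le> z" "z < ?q" for z
    using q_lower[of z] that by (auto simp flip: not_less)
  then have "{0..<?q} \<subseteq> ?L"
    by auto
  moreover have "z \<le> ?q" if "z \<in> ?L" for z
    unfolding generalized_inverse_def
  proof (rule cInf_greatest)
    show "?U \<noteq> {}" using assms(2) by auto
    show "z \<le> w" if "w \<in> ?U" for w
    proof (rule ccontr)
      assume "\<not> z \<le> w"
      then have "F w \<le> F z" using assms(1) by (simp add: monoD)
      then show False using \<open>z \<in> ?L\<close> that by simp
    qed
  qed
  then have "?L \<subseteq> {0..?q}"
    by auto
  moreover have "?L \<in> sets lborel"
    by measurable
  ultimately have "emeasure lborel {0..<?q} \<le> emeasure lborel ?L"
    and "emeasure lborel ?L \<le> emeasure lborel {0..?q}"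
    by (auto intro: emeasure_mono)
  then show ?thesis
    using generalized_inverse_nonneg[OF assms(2)] by simp
qed

lemma nn_integral_min_eq_nn_integral_generalized_inverse:
  fixes F :: "real \<Rightarrow> real"
  assumes mono: "mono F" and bounded: "\<And>z. F z \<le> m" and "0 \<le> a"
    and exceeds: "\<And>\<beta>. \<beta> < m \<Longrightarrow> \<exists>z\<ge>0. \<beta> < F z"
  shows "(\<integral>\<^sup>+z\<in>{0..}. ennreal (min (m - F z) a) \<partial>lborel)
    = (\<integral>\<^sup>+\<beta>\<in>{m - a..<m}. ennreal (generalized_inverse F \<beta>) \<partial>lborel)"
proof -
  have [measurable]: "F \<in> borel_measurable borel"
    using borel_measurable_mono[OF mono] .
  define S where "S = {(z, \<beta>). 0 \<le> z \<and> m - a \<le> \<beta> \<and> \<beta> < m \<and> F z \<le> \<beta>}"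
  have "S = {p \<in> space (lborel \<Otimes>\<^sub>M lborel). 0 \<le> fst p \<and> m - a \<le> snd p \<and> snd p < m \<and> F (fst p) \<le> snd p}"
    by (auto simp: S_def space_pair_measure)
  also have "\<dots> \<in> sets (lborel \<Otimes>\<^sub>M lborel)"
    by measurable
  finally have [measurable]: "S \<in> sets (lborel \<Otimes>\<^sub>M lborel)" .
  have section_fst: "(\<integral>\<^sup>+\<beta>. indicator S (z, \<beta>) \<partial>lborel) = ennreal (min (m - F z) a) * indicator {0..} z" for z
  proof (cases "0 \<le> z")
    case True
    then have "(\<lambda>\<beta>. indicator S (z, \<beta>)) = (indicator {max (m - a) (F z)..<m} :: real \<Rightarrow> ennreal)"
      by (auto simp: S_def indicator_def fun_eq_iff)
    moreover have "m - max (m - a) (F z) = min (m - F z) a"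
      by linarith
    ultimately show ?thesis
      using True bounded[of z] \<open>0 \<le> a\<close> by simp
  next
    case False
    then show ?thesis by (simp add: S_def indicator_def)
  qed
  have section_snd: "(\<integral>\<^sup>+z. indicator S (z, \<beta>) \<partial>lborel)
      = ennreal (generalized_inverse F \<beta>) * indicator {m - a..<m} \<beta>" for \<beta>
  proof (cases "\<beta> \<in> {m - a..<m}")
    case True
    then have "(\<lambda>z. indicator S (z, \<beta>)) = (indicator {z. 0 \<le> z \<and> F z \<le> \<beta>} :: real \<Rightarrow> ennreal)"
      by (auto simp: S_def indicator_def fun_eq_iff)
    moreover have "{z. 0 \<le> z \<and> F z \<le> \<beta>} \<in> sets lborel"
      by measurable
    ultimately show ?thesis
      using True emeasure_sublevel_eq_generalized_inverse[OF mono exceeds] by simp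
  next
    case False
    then show ?thesis by (auto simp: S_def indicator_def)
  qed
  have "(\<integral>\<^sup>+z\<in>{0..}. ennreal (min (m - F z) a) \<partial>lborel)
      = (\<integral>\<^sup>+z. \<integral>\<^sup>+\<beta>. indicator S (z, \<beta>) \<partial>lborel \<partial>lborel)"
    by (simp add: section_fst)
  also have "\<dots> = (\<integral>\<^sup>+\<beta>. \<integral>\<^sup>+z. indicator S (z, \<beta>) \<partial>lborel \<partial>lborel)"
    using lborel_pair.Fubini'[of "\<lambda>z \<beta>. indicator S (z, \<beta>)"] by simp
  also have "\<dots> = (\<integral>\<^sup>+\<beta>\<in>{m - a..<m}. ennreal (generalized_inverse F \<beta>) \<partial>lborel)"
    by (simp add: section_snd)
  finally show ?thesis .
qed

lemma integral_min_eq_integral_generalized_inverse: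
  fixes F :: "real \<Rightarrow> real"
  assumes mono: "mono F" and bounded: "\<And>z. F z \<le> m" and "0 \<le> a"
    and exceeds: "\<And>\<beta>. \<beta> < m \<Longrightarrow> \<exists>z\<ge>0. \<beta> < F z"
  shows "(LBINT z:{0..}. min (m - F z) a) = (LBINT \<beta>:{m - a..m}. generalized_inverse F \<beta>)"
proof -
  have [measurable]: "F \<in> borel_measurable borel" "generalized_inverse F \<in> borel_measurable borel"
    using borel_measurable_mono[OF mono] borel_measurable_generalized_inverse[OF bounded exceeds] .
  have not_m: "AE \<beta> in lborel. \<beta> \<noteq> m"
    using AE_lborel_singleton[of m] by simp
  have "(LBINT z:{0..}. min (m - F z) a) = enn2real (\<integral>\<^sup>+z\<in>{0..}. ennreal (min (m - F z) a) \<partial>lborel)"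
    using bounded \<open>0 \<le> a\<close> by (intro set_integral_eq_set_nn_integral) auto
  also have "\<dots> = enn2real (\<integral>\<^sup>+\<beta>\<in>{m - a..<m}. ennreal (generalized_inverse F \<beta>) \<partial>lborel)"
    by (simp add: nn_integral_min_eq_nn_integral_generalized_inverse assms)
  also have "(\<integral>\<^sup>+\<beta>\<in>{m - a..<m}. ennreal (generalized_inverse F \<beta>) \<partial>lborel)
      = (\<integral>\<^sup>+\<beta>\<in>{m - a..m}. ennreal (generalized_inverse F \<beta>) \<partial>lborel)"
    using not_m by (intro nn_integral_cong_AE) (auto simp: indicator_def)
  also have "enn2real \<dots> = (LBINT \<beta>:{m - a..m}. generalized_inverse F \<beta>)"
    using not_m exceeds by (intro set_integral_eq_set_nn_integral[symmetric])
      (auto elim!: eventually_mono intro: generalized_inverse_nonneg)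
  finally show ?thesis .
qed

lemma mono_F_mu:
  assumes "finite_measure M"
  shows "mono (F_mu M N)"
proof (rule monoI)
  fix y y' :: real
  assume "y \<le> y'"
  then have "RN_deriv M N \<omega> \<le> ennreal y'" if "RN_deriv M N \<omega> \<le> ennreal y" for \<omega>
    using that ennreal_leI order_trans by metis
  then have "{\<omega> \<in> space M. RN_deriv M N \<omega> \<le> ennreal y} \<subseteq> {\<omega> \<in> space M. RN_deriv M N \<omega> \<le> ennreal y'}"
    by blast
  moreover have "{\<omega> \<in> space M. RN_deriv M N \<omega> \<le> ennreal y'} \<in> sets M"
    by measurable
  ultimately show "F_mu M N y \<le> F_mu M N y'"
    unfolding F_mu_def using finite_measure.finite_measure_mono[OF assms] by blast
qed

lemma F_mu_le_measure_space:
  assumes "finite_measure M"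
  shows "F_mu M N y \<le> measure M (space M)"
  unfolding F_mu_def using assms by (intro finite_measure.bounded_measure) auto

lemma ex_F_mu_gt:
  assumes "finite_measure M" and "sigma_finite_measure N"
    and "absolutely_continuous M N" and "sets N = sets M"
    and "\<beta> < measure M (space M)"
  shows "\<exists>z\<ge>0. \<beta> < F_mu M N z"
proof -
  interpret finite_measure M by fact
  define A where "A n = {\<omega> \<in> space M. RN_deriv M N \<omega> \<le> ennreal (real n)}" for n
  have "A n \<in> sets M" for n
    unfolding A_def by measurable
  moreover have "incseq A"
    unfolding A_def incseq_def by (auto intro: order_trans ennreal_leI)
  ultimately have "(\<lambda>n. measure M (A n)) \<longlonglongrightarrow> measure M (\<Union>n. A n)"
    by (intro finite_Lim_measure_incseq) auto
  moreover have "(\<Union>n. A n) = {\<omega> \<in> space M. RN_deriv M N \<omega> \<noteq> \<infinity>}"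
  proof (intro set_eqI iffI)
    fix \<omega> assume "\<omega> \<in> {\<omega> \<in> space M. RN_deriv M N \<omega> \<noteq> \<infinity>}"
    then obtain n where "RN_deriv M N \<omega> < of_nat n" "\<omega> \<in> space M"
      using ennreal_Ex_less_of_nat by (auto simp: less_top)
    then show "\<omega> \<in> (\<Union>n. A n)"
      unfolding A_def ennreal_of_nat_eq_real_of_nat by (auto intro!: less_imp_le)
  qed (auto simp: A_def top_unique)
  moreover have "measure M {\<omega> \<in> space M. RN_deriv M N \<omega> \<noteq> \<infinity>} = measure M (space M)"
    using RN_deriv_finite[OF assms(2-4)] by (intro measure_eq_AE) measurable
  ultimately have "eventually (\<lambda>n. \<beta> < measure M (A n)) sequentially"
    using assms(5) order_tendstoD(1) by metis
  then obtain n where "\<beta> < measure M (A n)"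
    by (auto simp: eventually_sequentially)
  then show ?thesis
    unfolding F_mu_def A_def by (intro exI[of _ "real n"]) auto
qed

theorem proposition15:
  fixes M N :: "'a measure"
  assumes "Sigma_chains M \<noteq> {}"
    and "finite_measure M"
    and "finite_measure N"
    and "sets N = sets M"
    and "absolutely_continuous M N"
    and "A \<in> sets M"
  shows "v_mu M N A = (LBINT \<beta>:{measure M (space M - A)..measure M (space M)}. F_mu_inv M N \<beta>)"
proof -
  interpret M: finite_measure M by fact
  interpret N: finite_measure N by fact
  let ?m = "measure M (space M)"
  have "v_mu M N A = (LBINT z:{0..}. min (?m - F_mu M N z) (measure M A))"
    unfolding v_mu_def ..
  also have "\<dots> = (LBINT \<beta>:{?m - measure M A..?m}. generalized_inverse (F_mu M N) \<beta>)"
    using assms(2-5) N.sigma_finite_measure_axioms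
    by (intro integral_min_eq_integral_generalized_inverse mono_F_mu F_mu_le_measure_space ex_F_mu_gt)
      auto
  also have "?m - measure M A = measure M (space M - A)"
    using M.finite_measure_compl[OF assms(6)] ..
  also have "generalized_inverse (F_mu M N) = F_mu_inv M N"
    unfolding generalized_inverse_def F_mu_inv_def ..
  finally show ?thesis .
qed

end
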